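(* Let $r>1$ and integers $N\ge1$, $K>2$, and let $L(r,K,N)$ and $U(r,K,N)$ denote respectively $\frac{\gamma_1^*(r,K,N)}{\frac{r^N-(r-1)^N}{r^{N-1}}+\gamma_1^*(r,K,N)}$ and $\frac{\gamma_2^*(r,K,N)}{\frac{r^N-(r-1)^N}{r^{N-1}}+\gamma_2^*(r,K,N)}$, where $\gamma_1^*(r,K,N)=N\sum_{i=N}^\infty\frac1i(1-\frac1r)^i(1-\frac1{K-1})^i$ and $\gamma_2^*(r,K,N)=N\sum_{i=N}^\infty\frac1i(1-\frac1r)^i$. Then: (i) for fixed $r,N$, $U(r,K,N)-L(r,K,N)\to0$ as $K\to\infty$; (ii) for fixed $r,K$, $\lim_{N\to\infty}\eta(r,K,N)=0$; (iii) $\lim_{r\to\infty}\left(\lim_{K\to\infty}\eta(r,K,N)\right)=1$; (iv) for fixed $r,K$, $\eta(r,K,N)=O\big((1-1/r)^N\big)$ as $N\to\infty$.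
   Context: Single item auction with $N$ buyers whose values are i.i.d., each taking values $0<x^1<\dots<x^K$ with probabilities $p^i>0$, $\sum_ip^i=1$. Let $z^i=(\sum_{j=1}^ip^j)^N-(\sum_{j=1}^{i-1}p^j)^N$ and reserve index $t(x,p)=\max\{i: i\in\arg\max_{1\le k\le K}x^k\sum_{j=k}^Kp^j\}$. The efficiency loss ratio of the welfare-maximizing revenue-optimal auction is $\mathrm{ELR}_N(x,p)=\sum_{i=1}^{t(x,p)-1}z^ix^i/\sum_{i=1}^Kz^ix^i$. $\eta(r,K,N)$ is the supremum of $\mathrm{ELR}_N(x,p)$ over all such $p$ and all $x$ with $0<x^1<\dots<x^K\le rx^1$. *)

theory Defs
  imports "HOL-Analysis.Analysis" "HOL-Library.Landau_Symbols"
begin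

text \<open>Values x 1 < ... < x K and probabilities p 1, ..., p K are functions on nat,
  only their restriction to {1..K} is relevant.\<close>

definition zz :: "nat \<Rightarrow> (nat \<Rightarrow> real) \<Rightarrow> nat \<Rightarrow> real" where
  "zz N p i = (\<Sum>j=1..i. p j) ^ N - (\<Sum>j=1..i-1. p j) ^ N"

definition reserve_idx :: "nat \<Rightarrow> (nat \<Rightarrow> real) \<Rightarrow> (nat \<Rightarrow> real) \<Rightarrow> nat" where
  "reserve_idx K x p = Max {i \<in> {1..K}. \<forall>k\<in>{1..K}.
      x k * (\<Sum>j=k..K. p j) \<le> x i * (\<Sum>j=i..K. p j)}"

definition ELR :: "nat \<Rightarrow> nat \<Rightarrow> (nat \<Rightarrow> real) \<Rightarrow> (nat \<Rightarrow> real) \<Rightarrow> real" where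
  "ELR N K x p = (\<Sum>i=1..reserve_idx K x p - 1. zz N p i * x i) / (\<Sum>i=1..K. zz N p i * x i)"

definition admissible :: "real \<Rightarrow> nat \<Rightarrow> (nat \<Rightarrow> real) \<Rightarrow> (nat \<Rightarrow> real) \<Rightarrow> bool" where
  "admissible r K x p \<longleftrightarrow>
     (\<forall>i\<in>{1..K}. p i > 0) \<and> (\<Sum>i=1..K. p i) = 1 \<and>
     0 < x 1 \<and> (\<forall>i\<in>{1..K}. \<forall>j\<in>{1..K}. i < j \<longrightarrow> x i < x j) \<and> x K \<le> r * x 1"

definition eta :: "real \<Rightarrow> nat \<Rightarrow> nat \<Rightarrow> real" where
  "eta r K N = Sup {ELR N K x p | x p. admissible r K x p}"

definition gamma1 :: "real \<Rightarrow> nat \<Rightarrow> nat \<Rightarrow> real" where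
  "gamma1 r K N = real N * (\<Sum>i. if i \<ge> N then (1 / real i) * (1 - 1/r) ^ i * (1 - 1 / (real K - 1)) ^ i else 0)"

definition gamma2 :: "real \<Rightarrow> nat \<Rightarrow> nat \<Rightarrow> real" where
  "gamma2 r K N = real N * (\<Sum>i. if i \<ge> N then (1 / real i) * (1 - 1/r) ^ i else 0)"

definition LB :: "real \<Rightarrow> nat \<Rightarrow> nat \<Rightarrow> real" where
  "LB r K N = gamma1 r K N / ((r ^ N - (r - 1) ^ N) / r ^ (N - 1) + gamma1 r K N)"

definition UB :: "real \<Rightarrow> nat \<Rightarrow> nat \<Rightarrow> real" where
  "UB r K N = gamma2 r K N / ((r ^ N - (r - 1) ^ N) / r ^ (N - 1) + gamma2 r K N)"

end

theory Submission
  imports Defs "HOL-Real_Asymp.Real_Asymp"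
begin

text \<open>The reserve's revenue is at least that of the lowest value x_1, which sells with certainty,
  and all values lie within a factor r; hence the reserve excludes probability mass at most
  1 - 1/r, the lost welfare is at most x_K (1 - 1/r)^N \<le> r x_1 (1 - 1/r)^N, and the total
  welfare is at least x_1. This gives eta \<le> r (1 - 1/r)^N, i.e. (ii) and (iv).
  For (iii), eta is nondecreasing in K and bounded by 1, so it converges as K \<rightarrow> \<infinity>; the
  equal-revenue instance, admissible once r \<ge> 2^(K-1), has efficiency loss ratio at least
  1 - N 2^N / (K - 2), which forces the limit to 1 as r \<rightarrow> \<infinity>.
  For (i), Bernoulli's inequality bounds gamma_2 - gamma_1 by N r / (K - 1), and g \<mapsto> g / (D + g)
  is 1/D-Lipschitz on g \<ge> 0.\<close>

section \<open>Welfare and revenue of admissible instances\<close>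

definition cdf :: "(nat \<Rightarrow> real) \<Rightarrow> nat \<Rightarrow> real" where
  "cdf p i = (\<Sum>j=1..i. p j)"

lemma cdf_0 [simp]: "cdf p 0 = 0"
  and cdf_Suc [simp]: "cdf p (Suc i) = cdf p i + p (Suc i)"
  by (simp_all add: cdf_def)

lemma zz_eq_cdf: "zz N p i = cdf p i ^ N - cdf p (i - 1) ^ N"
  by (simp add: zz_def cdf_def)

lemma sum_zz: "N \<ge> 1 \<Longrightarrow> (\<Sum>i=1..m. zz N p i) = cdf p m ^ N"
  by (induction m) (simp_all add: zz_eq_cdf)

lemma sum_tail_eq_one_minus_cdf:
  assumes "cdf p K = 1" "1 \<le> k" "k \<le> Suc K"
  shows "(\<Sum>j=k..K. p j) = 1 - cdf p (k - 1)"
proof -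
  have "{1..K} = {1..k-1} \<union> {k..K}" using assms by auto
  then have "cdf p K = cdf p (k - 1) + (\<Sum>j=k..K. p j)"
    unfolding cdf_def by (simp add: sum.union_disjoint)
  then show ?thesis using assms(1) by simp
qed

lemma admissible_K_pos: "admissible r K x p \<Longrightarrow> 1 \<le> K"
  by (cases K) (auto simp: admissible_def)

lemma admissible_cdf_last: "admissible r K x p \<Longrightarrow> cdf p K = 1"
  by (simp add: admissible_def cdf_def)

lemma admissible_cdf_mono:
  assumes "admissible r K x p" "i \<le> j" "j \<le> K"
  shows "cdf p i \<le> cdf p j"
  unfolding cdf_def
  by (rule sum_mono2) (use assms in \<open>auto simp: admissible_def intro: less_imp_le\<close>)

lemma admissible_cdf_nonneg: "admissible r K x p \<Longrightarrow> i \<le> K \<Longrightarrow> 0 \<le> cdf p i"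
  using admissible_cdf_mono[of r K x p 0 i] by simp

lemma admissible_values:
  assumes "admissible r K x p" "i \<in> {1..K}"
  shows "0 < x i" "x 1 \<le> x i" "x i \<le> x K"
proof -
  have mono: "\<forall>i\<in>{1..K}. \<forall>j\<in>{1..K}. i < j \<longrightarrow> x i < x j" and "0 < x 1"
    using assms(1) by (auto simp: admissible_def)
  show "x 1 \<le> x i" using mono assms(2) by (cases "i = 1") (auto intro: less_imp_le)
  show "x i \<le> x K" using mono assms(2) by (cases "i = K") (auto intro: less_imp_le)
  show "0 < x i" using \<open>x 1 \<le> x i\<close> \<open>0 < x 1\<close> by linarith
qed

lemma admissible_zz_nonneg:
  assumes "admissible r K x p" "i \<le> K"
  shows "0 \<le> zz N p i"
  unfolding zz_eq_cdf
  using assms admissible_cdf_mono[of r K x p "i - 1" i] admissible_cdf_nonneg[of r K x p "i - 1"]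
  by (simp add: power_mono)

definition partial_welfare :: "nat \<Rightarrow> (nat \<Rightarrow> real) \<Rightarrow> (nat \<Rightarrow> real) \<Rightarrow> nat \<Rightarrow> real" where
  "partial_welfare N x p m = (\<Sum>i=1..m. zz N p i * x i)"

lemma ELR_eq_partial_welfare:
  "ELR N K x p = partial_welfare N x p (reserve_idx K x p - 1) / partial_welfare N x p K"
  by (simp add: ELR_def partial_welfare_def)

lemma partial_welfare_mono:
  assumes "admissible r K x p" "m \<le> n" "n \<le> K"
  shows "0 \<le> partial_welfare N x p m" "partial_welfare N x p m \<le> partial_welfare N x p n"
proof -
  have nonneg: "0 \<le> zz N p i * x i" if "i \<in> {1..n}" for i
  proof -
    have "i \<in> {1..K}" using that assms(3) by simp
    then show ?thesis
      using admissible_zz_nonneg[OF assms(1)] admissible_values(1)[OF assms(1)]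
      by (simp add: less_imp_le)
  qed
  show "0 \<le> partial_welfare N x p m"
    unfolding partial_welfare_def using nonneg assms(2) by (intro sum_nonneg) simp
  show "partial_welfare N x p m \<le> partial_welfare N x p n"
    unfolding partial_welfare_def using nonneg assms(2) by (intro sum_mono2) auto
qed

lemma partial_welfare_le:
  assumes "admissible r K x p" "N \<ge> 1" "m \<le> K"
  shows "partial_welfare N x p m \<le> x K * cdf p m ^ N"
proof -
  have "partial_welfare N x p m \<le> (\<Sum>i=1..m. zz N p i * x K)"
    unfolding partial_welfare_def using assms admissible_values(3) admissible_zz_nonneg
    by (intro sum_mono mult_left_mono) auto
  also have "\<dots> = x K * cdf p m ^ N"
    using sum_zz[OF assms(2), of p m] by (simp add: sum_distrib_left[symmetric] mult.commute)
  finally show ?thesis .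
qed

lemma welfare_ge_lowest_value:
  assumes "admissible r K x p" "N \<ge> 1"
  shows "x 1 \<le> partial_welfare N x p K"
proof -
  have "x 1 = (\<Sum>i=1..K. zz N p i * x 1)"
    using sum_zz[OF assms(2)] admissible_cdf_last[OF assms(1)]
    by (simp add: sum_distrib_right[symmetric])
  also have "\<dots> \<le> partial_welfare N x p K"
    unfolding partial_welfare_def using assms admissible_values(2) admissible_zz_nonneg
    by (intro sum_mono mult_left_mono) auto
  finally show ?thesis .
qed

definition last_argmax :: "nat \<Rightarrow> (nat \<Rightarrow> 'a::linorder) \<Rightarrow> nat" where
  "last_argmax K f = Max {i \<in> {1..K}. \<forall>k\<in>{1..K}. f k \<le> f i}"

lemma reserve_idx_eq_last_argmax:
  "reserve_idx K x p = last_argmax K (\<lambda>k. x k * (\<Sum>j=k..K. p j))"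
  by (simp add: reserve_idx_def last_argmax_def)

lemma
  assumes "1 \<le> K"
  shows last_argmax_in: "last_argmax K f \<in> {1..K}"
    and last_argmax_ge: "\<And>k. k \<in> {1..K} \<Longrightarrow> f k \<le> f (last_argmax K f)"
proof -
  let ?A = "{i \<in> {1..K}. \<forall>k\<in>{1..K}. f k \<le> f i}"
  obtain i where "i \<in> {1..K}" "Max (f ` {1..K}) = f i"
    using obtains_MAX[of "{1..K}"] assms by auto
  moreover have "f k \<le> Max (f ` {1..K})" if "k \<in> {1..K}" for k
    using that by (intro Max_ge) auto
  ultimately have "i \<in> ?A" by simp
  then have "Max ?A \<in> ?A" by (intro Max_in) auto
  then show "last_argmax K f \<in> {1..K}" "\<And>k. k \<in> {1..K} \<Longrightarrow> f k \<le> f (last_argmax K f)"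
    unfolding last_argmax_def by auto
qed

lemma last_argmax_greatest:
  "j \<in> {1..K} \<Longrightarrow> (\<And>k. k \<in> {1..K} \<Longrightarrow> f k \<le> f j) \<Longrightarrow> j \<le> last_argmax K f"
  unfolding last_argmax_def by (rule Max_ge) auto

lemma last_argmax_eqI:
  assumes "j \<in> {1..K}" "\<And>k. k \<in> {1..K} \<Longrightarrow> f k \<le> f j"
    and "\<And>i. i \<in> {1..K} \<Longrightarrow> (\<And>k. k \<in> {1..K} \<Longrightarrow> f k \<le> f i) \<Longrightarrow> i \<le> j"
  shows "last_argmax K f = j"
  unfolding last_argmax_def by (rule Max_eqI) (use assms in auto)

lemma last_argmax_insert_second:
  assumes K: "1 \<le> K" and t: "2 \<le> last_argmax K f"
    and g1: "g 1 = f 1" and g2: "g 2 \<le> f (last_argmax K f)"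
    and gSuc: "\<And>k. k \<in> {2..K} \<Longrightarrow> g (Suc k) = f k"
  shows "last_argmax (Suc K) g = Suc (last_argmax K f)"
proof -
  define t where "t = last_argmax K f"
  have t_mem: "t \<in> {2..K}" and f_le: "\<And>k. k \<in> {1..K} \<Longrightarrow> f k \<le> f t"
    using last_argmax_in[OF K] last_argmax_ge[OF K] t unfolding t_def by auto
  have g_le: "g k \<le> f t" if k: "k \<in> {1..Suc K}" for k
  proof -
    have "k = 1 \<or> k = 2 \<or> 3 \<le> k" using k by (simp only: atLeastAtMost_iff) linarith
    then show ?thesis
    proof (elim disjE)
      assume "3 \<le> k"
      then have "k - 1 \<in> {2..K}" "Suc (k - 1) = k" using k by auto
      then show ?thesis using gSuc[of "k - 1"] f_le[of "k - 1"] by auto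
    qed (use g1 g2 f_le K in \<open>auto simp: t_def\<close>)
  qed
  show ?thesis
    unfolding t_def[symmetric]
  proof (rule last_argmax_eqI)
    show "Suc t \<in> {1..Suc K}" using t_mem by simp
    show "g k \<le> g (Suc t)" if "k \<in> {1..Suc K}" for k
      using g_le[OF that] gSuc[OF t_mem] by simp
    fix i assume i: "i \<in> {1..Suc K}" and i_max: "\<And>k. k \<in> {1..Suc K} \<Longrightarrow> g k \<le> g i"
    show "i \<le> Suc t"
    proof (cases "i \<le> 2")
      case False
      then have i': "i - 1 \<in> {2..K}" "i = Suc (i - 1)" using i by auto
      have "f k \<le> f (i - 1)" if "k \<in> {1..K}" for k
      proof (cases "k = 1")
        case True then show ?thesis using i_max[of 1] g1 gSuc[OF i'(1)] i'(2) by simp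
      next
        case False
        then show ?thesis using i_max[of "Suc k"] gSuc[of k] gSuc[OF i'(1)] i'(2) that by simp
      qed
      then have "i - 1 \<le> t"
        unfolding t_def using i' by (intro last_argmax_greatest) auto
      then show ?thesis by simp
    qed (use t_mem in simp)
  qed
qed

lemma reserve_idx_mem: "admissible r K x p \<Longrightarrow> reserve_idx K x p \<in> {1..K}"
  unfolding reserve_idx_eq_last_argmax by (intro last_argmax_in admissible_K_pos)

lemma revenue_le_reserve_revenue:
  assumes "admissible r K x p" "k \<in> {1..K}"
  shows "x k * (\<Sum>j=k..K. p j) \<le>
    x (reserve_idx K x p) * (\<Sum>j=reserve_idx K x p..K. p j)"
  using last_argmax_ge[OF admissible_K_pos[OF assms(1)] assms(2)]
  unfolding reserve_idx_eq_last_argmax .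

lemma ELR_nonneg:
  assumes "admissible r K x p"
  shows "0 \<le> ELR N K x p"
  unfolding ELR_eq_partial_welfare
  using partial_welfare_mono(1)[OF assms, of "reserve_idx K x p - 1" K]
    partial_welfare_mono(1)[OF assms, of K K] reserve_idx_mem[OF assms] by auto

lemma ELR_le_one:
  assumes "admissible r K x p" "N \<ge> 1"
  shows "ELR N K x p \<le> 1"
proof -
  have "0 < x 1" using assms(1) by (simp add: admissible_def)
  then have "0 < partial_welfare N x p K" using welfare_ge_lowest_value[OF assms] by linarith
  moreover have "partial_welfare N x p (reserve_idx K x p - 1) \<le> partial_welfare N x p K"
    using partial_welfare_mono(2)[OF assms(1)] reserve_idx_mem[OF assms(1)] by auto
  ultimately show ?thesis unfolding ELR_eq_partial_welfare by simp
qed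

lemma cdf_below_reserve_le:
  assumes "admissible r K x p"
  shows "cdf p (reserve_idx K x p - 1) \<le> 1 - 1/r"
proof -
  define t where "t = reserve_idx K x p"
  have t: "t \<in> {1..K}" using reserve_idx_mem[OF assms] by (simp add: t_def)
  have x1: "0 < x 1" and xK: "x K \<le> r * x 1" using assms by (auto simp: admissible_def)
  have F: "cdf p K = 1" using admissible_cdf_last[OF assms] .
  have F_le: "cdf p (t - 1) \<le> 1" using admissible_cdf_mono[OF assms, of "t - 1" K] t F by auto
  have "x 1 * 1 \<le> x t * (1 - cdf p (t - 1))"
    using revenue_le_reserve_revenue[OF assms, of 1] t F sum_tail_eq_one_minus_cdf[OF F]
    by (simp add: t_def)
  also have "\<dots> \<le> r * x 1 * (1 - cdf p (t - 1))"
    using admissible_values(3)[OF assms t] xK F_le by (intro mult_right_mono) auto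
  finally have "1 \<le> r * (1 - cdf p (t - 1))" using x1 by (simp add: mult.assoc)
  moreover have "0 < r * x 1" using xK admissible_values(1)[OF assms, of K] t by auto
  then have "0 < r" using x1 by (simp add: zero_less_mult_iff)
  ultimately show ?thesis unfolding t_def by (simp add: field_simps)
qed

lemma ELR_le_geometric:
  assumes adm: "admissible r K x p" and N: "N \<ge> 1"
  shows "ELR N K x p \<le> r * (1 - 1/r) ^ N"
proof -
  define t where "t = reserve_idx K x p"
  have t: "t \<in> {1..K}" using reserve_idx_mem[OF adm] by (simp add: t_def)
  have x1: "0 < x 1" and xK: "x K \<le> r * x 1" using adm by (auto simp: admissible_def)
  have F: "0 \<le> cdf p (t - 1)" "cdf p (t - 1) \<le> 1 - 1/r"
    using admissible_cdf_nonneg[OF adm, of "t - 1"] cdf_below_reserve_le[OF adm] t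
    by (auto simp: t_def)
  have "partial_welfare N x p (t - 1) \<le> x K * cdf p (t - 1) ^ N"
    using partial_welfare_le[OF adm N, of "t - 1"] t by auto
  also have "\<dots> \<le> r * x 1 * (1 - 1/r) ^ N"
    using xK F admissible_values(1)[OF adm, of K] t by (intro mult_mono power_mono) auto
  finally have num: "partial_welfare N x p (t - 1) \<le> r * (1 - 1/r) ^ N * x 1"
    by (simp add: mult_ac)
  have "ELR N K x p \<le> partial_welfare N x p (t - 1) / x 1"
    unfolding ELR_eq_partial_welfare t_def[symmetric]
    using welfare_ge_lowest_value[OF adm N] partial_welfare_mono(1)[OF adm, of "t - 1" K] t x1
    by (intro divide_left_mono) auto
  also have "\<dots> \<le> r * (1 - 1/r) ^ N" using num x1 by (simp add: divide_simps)
  finally show ?thesis .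
qed

lemma admissible_exists:
  assumes "r > 1" "K \<ge> 1"
  shows "\<exists>x p. admissible r K x p"
proof -
  define x where "x i = 1 + (real i - 1) * (r - 1) / real K" for i :: nat
  have "admissible r K x (\<lambda>_. 1 / real K)"
    unfolding admissible_def
  proof (intro conjI ballI impI)
    show "x i < x j" if "i < j" for i j
      unfolding x_def using that assms by (intro add_strict_left_mono divide_strict_right_mono
          mult_strict_right_mono) auto
    have "(real K - 1) * (r - 1) \<le> real K * (r - 1)" using assms by (intro mult_right_mono) auto
    then show "x K \<le> r * x 1" using assms by (simp add: x_def field_simps)
  qed (use assms in \<open>auto simp: x_def\<close>)
  then show ?thesis by blast
qed

lemma ELR_le_eta:
  assumes "admissible r K x p" "N \<ge> 1"
  shows "ELR N K x p \<le> eta r K N"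
proof -
  have "bdd_above {ELR N K x p | x p. admissible r K x p}"
    using ELR_le_one[OF _ assms(2)] by (intro bdd_aboveI[of _ 1]) blast
  then show ?thesis unfolding eta_def by (rule cSup_upper[rotated]) (use assms(1) in blast)
qed

lemma eta_le_bound:
  assumes "r > 1" "K \<ge> 1" "\<And>x p. admissible r K x p \<Longrightarrow> ELR N K x p \<le> b"
  shows "eta r K N \<le> b"
  unfolding eta_def by (rule cSup_least) (use assms admissible_exists in auto)

lemma eta_nonneg: "r > 1 \<Longrightarrow> K \<ge> 1 \<Longrightarrow> N \<ge> 1 \<Longrightarrow> 0 \<le> eta r K N"
  by (metis admissible_exists ELR_le_eta ELR_nonneg order_trans)

lemma eta_le_one: "r > 1 \<Longrightarrow> K \<ge> 1 \<Longrightarrow> N \<ge> 1 \<Longrightarrow> eta r K N \<le> 1"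
  by (intro eta_le_bound ELR_le_one)

lemma eta_le_geometric: "r > 1 \<Longrightarrow> K \<ge> 1 \<Longrightarrow> N \<ge> 1 \<Longrightarrow> eta r K N \<le> r * (1 - 1/r) ^ N"
  by (intro eta_le_bound ELR_le_geometric)

lemma eta_tendsto_zero:
  assumes "r > 1" "K \<ge> 1"
  shows "((\<lambda>N. eta r K N) \<longlongrightarrow> 0) sequentially"
proof (rule tendsto_sandwich[of "\<lambda>_. 0" _ _ "\<lambda>N. r * (1 - 1/r) ^ N"])
  show "\<forall>\<^sub>F N in sequentially. 0 \<le> eta r K N"
    "\<forall>\<^sub>F N in sequentially. eta r K N \<le> r * (1 - 1/r) ^ N"
    using eta_nonneg[OF assms] eta_le_geometric[OF assms]
    by (auto intro: eventually_mono[OF eventually_ge_at_top[of 1]])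
  show "(\<lambda>N. r * (1 - 1/r) ^ N) \<longlonglongrightarrow> 0"
    using assms by (intro tendsto_mult_right_zero LIMSEQ_power_zero) auto
qed simp

lemma eta_bigo_geometric:
  assumes "r > 1" "K \<ge> 1"
  shows "(\<lambda>N. eta r K N) \<in> O(\<lambda>N. (1 - 1/r) ^ N)"
proof (rule bigoI[where c = r])
  have "0 \<le> 1 - 1/r" using assms by simp
  then show "\<forall>\<^sub>F N in sequentially. norm (eta r K N) \<le> r * norm ((1 - 1/r) ^ N)"
    using eta_nonneg[OF assms] eta_le_geometric[OF assms]
    by (auto intro: eventually_mono[OF eventually_ge_at_top[of 1]])
qed

section \<open>Monotonicity of eta in the number of values\<close>

lemma divide_le_add_divide_add:
  fixes a b d :: real
  assumes "0 \<le> a" "a \<le> b" "0 < b" "0 \<le> d"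
  shows "a / b \<le> (a + d) / (b + d)"
proof -
  have "a * (b + d) \<le> (a + d) * b" using assms by (simp add: algebra_simps mult_right_mono)
  then show ?thesis using assms by (simp add: divide_simps)
qed

text \<open>Moving a small mass e of the lowest value onto a new value y between the two lowest values
  keeps the instance admissible, moves the reserve up by one place (unless it was the lowest
  value, when nothing is lost anyway), and adds the same nonnegative amount to the lost and to
  the total welfare.\<close>

definition insert_second :: "real \<Rightarrow> real \<Rightarrow> (nat \<Rightarrow> real) \<Rightarrow> nat \<Rightarrow> real" where
  "insert_second a b f i = (if i \<le> 1 then a else if i = 2 then b else f (i - 1))"

lemma insert_second_simps [simp]:
  "insert_second a b f (Suc 0) = a" "insert_second a b f 2 = b"
  "insert_second a b f (Suc (Suc (Suc i))) = f (Suc (Suc i))"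
  by (simp_all add: insert_second_def)

lemma cdf_insert_second:
  assumes "1 \<le> m"
  shows "cdf (insert_second (p 1 - e) e p) (Suc m) = cdf p m"
  using assms
proof (induction m rule: dec_induct)
  case base
  show ?case by (simp add: cdf_def insert_second_def numeral_2_eq_2)
next
  case (step m)
  then obtain k where "m = Suc k" by (cases m) auto
  with step show ?case by simp
qed

lemma admissible_insert_second:
  assumes adm: "admissible r K x p" and K: "2 \<le> K"
    and y: "x 1 < y" "y < x 2" and e: "0 < e" "e < p 1"
  shows "admissible r (Suc K) (insert_second (x 1) y x) (insert_second (p 1 - e) e p)"
    (is "admissible r (Suc K) ?x ?p")
proof -
  have p: "0 < p i" if "1 \<le> i" "i \<le> K" for i using adm that by (simp add: admissible_def)
  have x: "x i < x j" if "i \<in> {1..K}" "j \<in> {1..K}" "i < j" for i j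
    using adm that by (simp add: admissible_def)
  have x_ge_2: "x 2 \<le> x j" if "2 \<le> j" "j \<le> K" for j
    using x[of 2 j] that by (cases "j = 2") auto
  show ?thesis
    unfolding admissible_def
  proof (intro conjI ballI impI)
    show "0 < ?p i" if "i \<in> {1..Suc K}" for i
      using that e p[of "i - 1"] by (auto simp: insert_second_def)
    show "(\<Sum>i=1..Suc K. ?p i) = 1"
      using cdf_insert_second[of K p e] admissible_cdf_last[OF adm] K by (simp add: cdf_def)
    show "0 < ?x 1" using adm by (simp add: admissible_def)
    show "?x (Suc K) \<le> r * ?x 1" using adm K by (simp add: admissible_def insert_second_def)
    fix i j assume i: "i \<in> {1..Suc K}" and j: "j \<in> {1..Suc K}" and ij: "i < j"
    show "?x i < ?x j"
    proof (cases "i \<le> 2")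
      case True
      then have "?x i \<le> y" using i y by (auto simp: insert_second_def)
      moreover have "y < ?x j" if "j \<noteq> 2"
      proof -
        have j3: "3 \<le> j" and j': "2 \<le> j - 1" "j - 1 \<le> K" using that i j ij by auto
        have "x 2 \<le> x (j - 1)" using x_ge_2[OF j'] .
        then show ?thesis using y j3 by (simp add: insert_second_def)
      qed
      ultimately show ?thesis using True i ij y by (cases "j = 2") (auto simp: insert_second_def)
    next
      case False
      then show ?thesis using x[of "i - 1" "j - 1"] i j ij by (auto simp: insert_second_def)
    qed
  qed
qed

lemma reserve_idx_insert_second:
  fixes x p :: "nat \<Rightarrow> real" and y e :: real
  defines "x' \<equiv> insert_second (x 1) y x" and "p' \<equiv> insert_second (p 1 - e) e p"
  assumes adm: "admissible r K x p" and adm': "admissible r (Suc K) x' p'"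
    and t: "2 \<le> reserve_idx K x p" and y: "y * (1 - (p 1 - e)) \<le> x 2 * (1 - p 1)"
  shows "reserve_idx (Suc K) x' p' = Suc (reserve_idx K x p)"
proof -
  define f where "f = (\<lambda>k. x k * (\<Sum>j=k..K. p j))"
  define g where "g = (\<lambda>k. x' k * (\<Sum>j=k..Suc K. p' j))"
  have res: "reserve_idx K x p = last_argmax K f" "reserve_idx (Suc K) x' p' = last_argmax (Suc K) g"
    by (simp_all add: f_def g_def reserve_idx_eq_last_argmax)
  have K: "2 \<le> K" using t reserve_idx_mem[OF adm] by simp
  have f: "f k = x k * (1 - cdf p (k - 1))" if "1 \<le> k" "k \<le> Suc K" for k
    unfolding f_def using sum_tail_eq_one_minus_cdf[OF admissible_cdf_last[OF adm]] that by simp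
  have g: "g k = x' k * (1 - cdf p' (k - 1))" if "1 \<le> k" "k \<le> Suc (Suc K)" for k
    unfolding g_def using sum_tail_eq_one_minus_cdf[OF admissible_cdf_last[OF adm']] that by simp
  have f_le: "f 2 \<le> f (last_argmax K f)"
    using K revenue_le_reserve_revenue[OF adm, of 2] by (simp add: res f_def)
  have "last_argmax (Suc K) g = Suc (last_argmax K f)"
  proof (rule last_argmax_insert_second)
    show "1 \<le> K" "2 \<le> last_argmax K f"
      using K t by (simp_all add: res)
    show "g 1 = f 1" using f[of 1] g[of 1] by (simp add: x'_def)
    show "g 2 \<le> f (last_argmax K f)"
    proof -
      have "cdf p' 1 = p 1 - e" "cdf p 1 = p 1" by (simp_all add: p'_def cdf_def)
      then show ?thesis using f[of 2] g[of 2] K y f_le by (simp add: x'_def)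
    qed
    show "g (Suc k) = f k" if "k \<in> {2..K}" for k
    proof -
      have "1 \<le> k - 1" "Suc (k - 1) = k" using that by auto
      then have "cdf p' k = cdf p (k - 1)"
        using cdf_insert_second[of "k - 1" p e] by (simp add: p'_def)
      moreover have "x' (Suc k) = x k"
        using that by (simp add: x'_def insert_second_def)
      ultimately show ?thesis using f[of k] g[of "Suc k"] that by simp
    qed
  qed
  then show ?thesis by (simp add: res)
qed

lemma partial_welfare_insert_second:
  fixes x p :: "nat \<Rightarrow> real" and y e :: real
  defines "x' \<equiv> insert_second (x 1) y x" and "p' \<equiv> insert_second (p 1 - e) e p"
  assumes "N \<ge> 1" "1 \<le> m"
  shows "partial_welfare N x' p' (Suc m) =
    partial_welfare N x p m + (y - x 1) * (p 1 ^ N - (p 1 - e) ^ N)"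
  using assms(4)
proof (induction m rule: dec_induct)
  case base
  have "partial_welfare N x' p' 2 = (p 1 - e) ^ N * x 1 + (p 1 ^ N - (p 1 - e) ^ N) * y"
    using assms(3) by (simp add: partial_welfare_def zz_eq_cdf cdf_def x'_def p'_def
        insert_second_def numeral_2_eq_2)
  also have "\<dots> = partial_welfare N x p 1 + (y - x 1) * (p 1 ^ N - (p 1 - e) ^ N)"
    using assms(3) by (simp add: partial_welfare_def zz_eq_cdf cdf_def algebra_simps)
  finally show ?case by (simp add: numeral_2_eq_2)
next
  case (step m)
  have "zz N p' (Suc (Suc m)) = zz N p (Suc m)"
    using cdf_insert_second[of m p e] cdf_insert_second[of "Suc m" p e] step(1)
    by (simp add: zz_eq_cdf p'_def)
  moreover have "x' (Suc (Suc m)) = x (Suc m)"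
    using step(1) by (simp add: x'_def insert_second_def)
  ultimately show ?case using step(3) by (simp add: partial_welfare_def)
qed

lemma ELR_le_ELR_insert_second:
  fixes x p :: "nat \<Rightarrow> real" and y e :: real
  defines "x' \<equiv> insert_second (x 1) y x" and "p' \<equiv> insert_second (p 1 - e) e p"
  assumes adm: "admissible r K x p" and adm': "admissible r (Suc K) x' p'" and N: "N \<ge> 1"
    and "x 1 \<le> y" "0 \<le> e" "e \<le> p 1" and y: "y * (1 - (p 1 - e)) \<le> x 2 * (1 - p 1)"
  shows "ELR N K x p \<le> ELR N (Suc K) x' p'"
proof (cases "reserve_idx K x p = 1")
  case True
  then show ?thesis using ELR_nonneg[OF adm'] by (simp add: ELR_eq_partial_welfare partial_welfare_def)
next
  case False
  define t where "t = reserve_idx K x p"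
  define d where "d = (y - x 1) * (p 1 ^ N - (p 1 - e) ^ N)"
  have t: "2 \<le> t" "t \<le> K" using False reserve_idx_mem[OF adm] by (auto simp: t_def)
  have "reserve_idx (Suc K) x' p' = Suc t"
    using reserve_idx_insert_second[OF adm _ _ y] adm' t by (simp add: t_def x'_def p'_def)
  then have "ELR N (Suc K) x' p' =
      (partial_welfare N x p (t - 1) + d) / (partial_welfare N x p K + d)"
    using partial_welfare_insert_second[OF N, of "t - 1" x y p e]
      partial_welfare_insert_second[OF N, of K x y p e] t
    by (simp add: ELR_eq_partial_welfare x'_def p'_def d_def)
  moreover have "0 \<le> d" unfolding d_def using assms by (auto intro!: power_mono)
  moreover have "0 < partial_welfare N x p K"
    using welfare_ge_lowest_value[OF adm N] adm by (simp add: admissible_def)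
  ultimately show ?thesis
    unfolding ELR_eq_partial_welfare t_def[symmetric]
    using partial_welfare_mono[OF adm, of "t - 1" K] t
    by (simp add: divide_le_add_divide_add)
qed

lemma ELR_le_ELR_Suc:
  assumes adm: "admissible r K x p" and K: "2 \<le> K" and N: "N \<ge> 1"
  shows "\<exists>x' p'. admissible r (Suc K) x' p' \<and> ELR N K x p \<le> ELR N (Suc K) x' p'"
proof -
  have x12: "0 < x 1" "x 1 < x 2" using adm K by (auto simp: admissible_def)
  have pos: "0 < p i" if "1 \<le> i" "i \<le> K" for i using adm that by (simp add: admissible_def)
  have "p 1 + p 2 \<le> 1"
    using admissible_cdf_mono[OF adm, of 2 K] admissible_cdf_last[OF adm] K
    by (simp add: cdf_def numeral_2_eq_2)
  moreover have "0 < p 1" "0 < p 2" using pos K by simp_all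
  ultimately have p: "0 < p 1" "p 1 < 1" by simp_all
  define y where "y = (x 1 + x 2) / 2"
  define e where "e = min (p 1 / 2) ((x 2 - y) * (1 - p 1) / y)"
  have y: "x 1 < y" "y < x 2" "0 < y" using x12 by (auto simp: y_def)
  have e: "0 < e" "e < p 1" using y p by (auto simp: e_def)
  have "e \<le> (x 2 - y) * (1 - p 1) / y" by (simp add: e_def)
  then have "y * e \<le> (x 2 - y) * (1 - p 1)" using y by (simp add: pos_le_divide_eq mult.commute)
  then have rev: "y * (1 - (p 1 - e)) \<le> x 2 * (1 - p 1)" by (simp add: algebra_simps)
  show ?thesis
    using admissible_insert_second[OF adm K y(1,2) e]
      ELR_le_ELR_insert_second[OF adm _ N _ _ _ rev] y e by auto
qed

lemma eta_mono:
  assumes "r > 1" "2 \<le> K" "N \<ge> 1"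
  shows "eta r K N \<le> eta r (Suc K) N"
proof (rule eta_le_bound)
  fix x p assume "admissible r K x p"
  then obtain x' p' where "admissible r (Suc K) x' p'" "ELR N K x p \<le> ELR N (Suc K) x' p'"
    using ELR_le_ELR_Suc assms(2,3) by blast
  then show "ELR N K x p \<le> eta r (Suc K) N" using ELR_le_eta assms(3) by (blast intro: order_trans)
qed (use assms in auto)

section \<open>The limit in K\<close>

text \<open>The equal-revenue instance: value 2^(k-1) is reached with probability (1/2)^(k-1), so
  every price earns revenue 1 and the reserve is the top value. Each of the K - 2 middle values
  carries welfare at least (1/2)^N, the top value at most N.\<close>

definition equal_revenue_tail :: "nat \<Rightarrow> nat \<Rightarrow> real" where
  "equal_revenue_tail K k = (if k \<le> K then (1/2) ^ (k - 1) else 0)"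

definition equal_revenue_prob :: "nat \<Rightarrow> nat \<Rightarrow> real" where
  "equal_revenue_prob K k = equal_revenue_tail K k - equal_revenue_tail K (Suc k)"

lemma cdf_equal_revenue_prob:
  "1 \<le> K \<Longrightarrow> cdf (equal_revenue_prob K) i = 1 - equal_revenue_tail K (Suc i)"
  by (induction i) (simp_all add: equal_revenue_prob_def equal_revenue_tail_def)

lemma admissible_equal_revenue:
  assumes "1 \<le> K" "2 ^ (K - 1) \<le> r"
  shows "admissible r K (\<lambda>k. 2 ^ (k - 1)) (equal_revenue_prob K)"
  unfolding admissible_def
proof (intro conjI ballI impI)
  show "0 < equal_revenue_prob K i" if "i \<in> {1..K}" for i
    using that by (auto simp: equal_revenue_prob_def equal_revenue_tail_def
        intro: power_strict_decreasing)
  show "(\<Sum>i=1..K. equal_revenue_prob K i) = 1"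
    using cdf_equal_revenue_prob[OF assms(1), of K] by (simp add: cdf_def equal_revenue_tail_def)
  show "(2::real) ^ (i - 1) < 2 ^ (j - 1)" if "i \<in> {1..K}" "j \<in> {1..K}" "i < j" for i j
    using that by (intro power_strict_increasing) auto
qed (use assms in auto)

lemma reserve_idx_equal_revenue:
  assumes "1 \<le> K"
  shows "reserve_idx K (\<lambda>k. 2 ^ (k - 1)) (equal_revenue_prob K) = K"
proof -
  have "(\<Sum>j=k..K. equal_revenue_prob K j) = (1/2) ^ (k - 1)" if "k \<in> {1..K}" for k
    using sum_tail_eq_one_minus_cdf[of "equal_revenue_prob K" K k] that
      cdf_equal_revenue_prob[OF assms] by (simp add: equal_revenue_tail_def)
  then have rev: "(2::real) ^ (k - 1) * (\<Sum>j=k..K. equal_revenue_prob K j) = 1"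
    if "k \<in> {1..K}" for k
    using that by (simp add: power_one_over)
  show ?thesis
    unfolding reserve_idx_eq_last_argmax
  proof (rule last_argmax_eqI)
    show "K \<in> {1..K}" using assms by simp
    show "2 ^ (k - 1) * (\<Sum>j=k..K. equal_revenue_prob K j) \<le>
        2 ^ (K - 1) * (\<Sum>j=K..K. equal_revenue_prob K j)" if "k \<in> {1..K}" for k
      using rev[OF that] rev[of K] assms by simp
  qed simp
qed

lemma power_diff_ge:
  fixes u v :: real
  assumes "0 \<le> v" "v \<le> u" "1 \<le> N"
  shows "(u - v) * v ^ (N - 1) \<le> u ^ N - v ^ N"
proof -
  obtain n where n: "N = Suc n" using assms(3) by (cases N) auto
  have "u * v ^ n \<le> u * u ^ n" using assms by (intro mult_left_mono power_mono) auto
  then show ?thesis by (simp add: n algebra_simps)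
qed

lemma equal_revenue_welfare_middle:
  assumes "2 \<le> i" "i < K" "1 \<le> N"
  shows "(1/2) ^ N \<le> zz N (equal_revenue_prob K) i * 2 ^ (i - 1)"
proof -
  obtain j where i: "i = Suc j" and j: "1 \<le> j" using assms(1) by (cases i) auto
  define a :: real where "a = (1/2) ^ j"
  have a: "0 < a" "a \<le> 1/2" unfolding a_def using power_decreasing[of 1 j "1/2::real"] j by auto
  have zz: "zz N (equal_revenue_prob K) i = (1 - a/2) ^ N - (1 - a) ^ N"
    using assms cdf_equal_revenue_prob[of K i] cdf_equal_revenue_prob[of K j]
    by (simp add: zz_eq_cdf equal_revenue_tail_def a_def i del: cdf_Suc)
  have "a / 2 * (1/2) ^ (N - 1) \<le> a / 2 * (1 - a) ^ (N - 1)"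
    using a by (intro mult_left_mono power_mono) auto
  also have "\<dots> \<le> zz N (equal_revenue_prob K) i"
    using power_diff_ge[of "1 - a" "1 - a/2" N] a assms(3) by (simp add: zz)
  finally have "a / 2 * (1/2) ^ (N - 1) * 2 ^ (i - 1) \<le> zz N (equal_revenue_prob K) i * 2 ^ (i - 1)"
    by (rule mult_right_mono) simp
  moreover have "a / 2 * (1/2) ^ (N - 1) * 2 ^ (i - 1) = (1/2::real) ^ N"
    using assms(3) by (cases N) (simp_all add: a_def i power_one_over)
  ultimately show ?thesis by linarith
qed

lemma equal_revenue_welfare_top:
  assumes "1 \<le> K"
  shows "zz N (equal_revenue_prob K) K * 2 ^ (K - 1) \<le> real N"
proof -
  define a :: real where "a = (1/2) ^ (K - 1)"
  have a: "0 \<le> a" "a \<le> 1" by (auto simp: a_def power_le_one)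
  have "1 + real N * - a \<le> (1 + - a) ^ N" by (rule Bernoulli_inequality) (use a in auto)
  then have "zz N (equal_revenue_prob K) K \<le> real N * a"
    using assms cdf_equal_revenue_prob[of K K] cdf_equal_revenue_prob[of K "K - 1"]
    by (simp add: zz_eq_cdf equal_revenue_tail_def a_def)
  then have "zz N (equal_revenue_prob K) K * 2 ^ (K - 1) \<le> real N * a * 2 ^ (K - 1)"
    by (rule mult_right_mono) simp
  also have "\<dots> = real N" by (simp add: a_def power_one_over)
  finally show ?thesis .
qed

lemma ELR_equal_revenue_ge:
  assumes K: "3 \<le> K" and N: "1 \<le> N"
  shows "1 - real N / ((real K - 2) * (1/2) ^ N) \<le>
    ELR N K (\<lambda>k. 2 ^ (k - 1)) (equal_revenue_prob K)"
proof -
  define x :: "nat \<Rightarrow> real" where "x = (\<lambda>k. 2 ^ (k - 1))"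
  define p where "p = equal_revenue_prob K"
  define A where "A = partial_welfare N x p (K - 1)"
  define B where "B = zz N p K * x K"
  have adm: "admissible (2 ^ (K - 1)) K x p"
    unfolding x_def p_def using K by (intro admissible_equal_revenue) auto
  have "(\<Sum>i=2..K-1. (1/2::real) ^ N) \<le> (\<Sum>i=2..K-1. zz N p i * x i)"
    using equal_revenue_welfare_middle[OF _ _ N] by (intro sum_mono) (auto simp: p_def x_def)
  also have "\<dots> \<le> A"
    unfolding A_def partial_welfare_def
    using admissible_zz_nonneg[OF adm] by (intro sum_mono2) (auto simp: x_def)
  finally have A: "(real K - 2) * (1/2) ^ N \<le> A" using K by (simp add: of_nat_diff)
  moreover have "0 < (real K - 2) * (1/2::real) ^ N" using K by simp
  moreover have B: "0 \<le> B" "B \<le> real N"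
    using admissible_zz_nonneg[OF adm, of K] equal_revenue_welfare_top[of K N] K
    by (simp_all add: B_def x_def p_def)
  ultimately have "1 - real N / ((real K - 2) * (1/2) ^ N) \<le> 1 - B / A"
    by (intro diff_left_mono frac_le) auto
  also have "\<dots> \<le> A / (A + B)"
  proof -
    have "0 < A" using A \<open>0 < (real K - 2) * (1/2) ^ N\<close> by linarith
    then have "B / (A + B) \<le> B / A" using B by (intro divide_left_mono) auto
    moreover have "A / (A + B) = 1 - B / (A + B)" using \<open>0 < A\<close> B by (simp add: field_simps)
    ultimately show ?thesis by linarith
  qed
  also have "A / (A + B) = ELR N K x p"
  proof -
    have "partial_welfare N x p K = A + B"
      using K by (cases K) (simp_all add: A_def B_def partial_welfare_def)
    then show ?thesis
      using reserve_idx_equal_revenue[of K] K by (simp add: ELR_eq_partial_welfare A_def x_def p_def)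
  qed
  finally show ?thesis by (simp add: x_def p_def)
qed

lemma eta_ge_equal_revenue:
  assumes "3 \<le> K" "1 \<le> N" "2 ^ (K - 1) \<le> r"
  shows "1 - real N / ((real K - 2) * (1/2) ^ N) \<le> eta r K N"
  using ELR_equal_revenue_ge[OF assms(1,2)]
    ELR_le_eta[OF admissible_equal_revenue[of K r] assms(2)] assms by simp

definition eta_limit :: "real \<Rightarrow> nat \<Rightarrow> real" where
  "eta_limit r N = (SUP K. eta r (K + 2) N)"

lemma
  assumes "r > 1" "1 \<le> N"
  shows eta_tendsto_eta_limit: "(\<lambda>K. eta r K N) \<longlonglongrightarrow> eta_limit r N"
    and eta_le_eta_limit: "2 \<le> K \<Longrightarrow> eta r K N \<le> eta_limit r N"
    and eta_limit_le_one: "eta_limit r N \<le> 1"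
proof -
  have bdd: "bdd_above (range (\<lambda>K. eta r (K + 2) N))"
    using eta_le_one[OF assms(1) _ assms(2)] by (intro bdd_aboveI[of _ 1]) auto
  have "incseq (\<lambda>K. eta r (K + 2) N)"
    using eta_mono[OF assms(1) _ assms(2)] by (intro incseq_SucI) simp
  then have "(\<lambda>K. eta r (K + 2) N) \<longlonglongrightarrow> eta_limit r N"
    unfolding eta_limit_def using bdd by (rule LIMSEQ_incseq_SUP[rotated])
  then show "(\<lambda>K. eta r K N) \<longlonglongrightarrow> eta_limit r N" by (rule LIMSEQ_offset)
  show "eta r K N \<le> eta_limit r N" if "2 \<le> K"
  proof -
    obtain m where "K = m + 2" using \<open>2 \<le> K\<close> by (metis add.commute le_Suc_ex)
    then show ?thesis using cSUP_upper[OF UNIV_I bdd, of m] by (simp add: eta_limit_def)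
  qed
  show "eta_limit r N \<le> 1"
    unfolding eta_limit_def using eta_le_one[OF assms(1) _ assms(2)] by (intro cSUP_least) auto
qed

lemma eta_limit_tendsto_one:
  assumes N: "1 \<le> N"
  shows "((\<lambda>r. eta_limit r N) \<longlongrightarrow> 1) at_top"
proof (rule tendstoI)
  fix \<epsilon> :: real assume "0 < \<epsilon>"
  have "(\<lambda>K. 1 - real N / ((real K - 2) * (1/2) ^ N)) \<longlonglongrightarrow> 1" by real_asymp
  then have "\<forall>\<^sub>F K in sequentially. 1 - \<epsilon> < 1 - real N / ((real K - 2) * (1/2) ^ N) \<and> 3 \<le> K"
    using \<open>0 < \<epsilon>\<close> by (intro eventually_conj order_tendstoD(1) eventually_ge_at_top) auto
  then obtain K where K: "1 - \<epsilon> < 1 - real N / ((real K - 2) * (1/2) ^ N)" "3 \<le> K"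
    using eventually_sequentially by auto
  show "\<forall>\<^sub>F r in at_top. dist (eta_limit r N) 1 < \<epsilon>"
  proof (rule eventually_mono[OF eventually_ge_at_top[of "2 ^ (K - 1)"]])
    fix r :: real assume r: "2 ^ (K - 1) \<le> r"
    have "(1::real) < 2 ^ (K - 1)" using K by (intro one_less_power) auto
    then have "1 < r" using r by linarith
    then have "1 - \<epsilon> < eta_limit r N"
      using K eta_ge_equal_revenue[OF K(2) N r] eta_le_eta_limit[OF _ N, of r K] by simp
    then show "dist (eta_limit r N) 1 < \<epsilon>"
      using eta_limit_le_one[OF \<open>1 < r\<close> N] by (simp add: dist_real_def)
  qed
qed

section \<open>The gap between the bounds UB and LB\<close>

definition log_tail :: "nat \<Rightarrow> real \<Rightarrow> real" where
  "log_tail N \<rho> = (\<Sum>i. if N \<le> i then 1 / real i * \<rho> ^ i else 0)"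

lemma gamma2_eq_log_tail: "gamma2 r K N = real N * log_tail N (1 - 1/r)"
  by (simp add: gamma2_def log_tail_def)

lemma gamma1_eq_log_tail:
  "gamma1 r K N = real N * log_tail N ((1 - 1/r) * (1 - 1 / (real K - 1)))"
  unfolding gamma1_def log_tail_def power_mult_distrib by (simp only: mult.assoc)

lemma log_tail_term_le:
  assumes "0 \<le> \<rho>"
  shows "0 \<le> (if N \<le> i then 1 / real i * \<rho> ^ i else 0)"
    "(if N \<le> i then 1 / real i * \<rho> ^ i else 0) \<le> \<rho> ^ i"
proof -
  have "1 / real i \<le> 1" by (cases i) auto
  then show "0 \<le> (if N \<le> i then 1 / real i * \<rho> ^ i else 0)"
    "(if N \<le> i then 1 / real i * \<rho> ^ i else 0) \<le> \<rho> ^ i"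
    using assms mult_right_mono[of "1 / real i" 1 "\<rho> ^ i"] by auto
qed

lemma summable_log_tail:
  assumes "0 \<le> \<rho>" "\<rho> < 1"
  shows "summable (\<lambda>i. if N \<le> i then 1 / real i * \<rho> ^ i else 0)"
  using assms log_tail_term_le[OF assms(1)]
  by (intro summable_comparison_test'[OF summable_geometric, of \<rho>]) auto

lemma log_tail_nonneg: "0 \<le> \<rho> \<Longrightarrow> \<rho> < 1 \<Longrightarrow> 0 \<le> log_tail N \<rho>"
  unfolding log_tail_def by (intro suminf_nonneg summable_log_tail log_tail_term_le)

text \<open>Termwise, Bernoulli's inequality 1 - t^i \<le> i (1 - t) cancels the weight 1/i.\<close>

lemma log_tail_diff_le:
  assumes \<rho>: "0 \<le> \<rho>" "\<rho> < 1" and t: "0 \<le> t" "t \<le> 1"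
  shows "0 \<le> log_tail N \<rho> - log_tail N (\<rho> * t)"
    "log_tail N \<rho> - log_tail N (\<rho> * t) \<le> (1 - t) / (1 - \<rho>)"
proof -
  define a where "a \<sigma> i = (if N \<le> i then 1 / real i * \<sigma> ^ i else 0)" for \<sigma> :: real and i :: nat
  have \<rho>t: "0 \<le> \<rho> * t" "\<rho> * t < 1" using \<rho> t mult_left_le[of t \<rho>] by auto
  have diff: "log_tail N \<rho> - log_tail N (\<rho> * t) = (\<Sum>i. a \<rho> i - a (\<rho> * t) i)"
    unfolding log_tail_def a_def using summable_log_tail[OF \<rho>, of N] summable_log_tail[OF \<rho>t, of N]
    by (rule suminf_diff)
  have term_bounds: "0 \<le> a \<rho> i - a (\<rho> * t) i" "a \<rho> i - a (\<rho> * t) i \<le> \<rho> ^ i * (1 - t)" for i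
  proof -
    have D: "0 \<le> 1 - t ^ i" "1 - t ^ i \<le> real i * (1 - t)"
      using t Bernoulli_inequality[of "- (1 - t)" i] by (auto simp: power_le_one algebra_simps)
    have eq: "a \<rho> i - a (\<rho> * t) i = (if N \<le> i then 1 / real i * \<rho> ^ i * (1 - t ^ i) else 0)"
      by (simp add: a_def power_mult_distrib right_diff_distrib)
    have "1 / real i * \<rho> ^ i * (1 - t ^ i) \<le> \<rho> ^ i * (1 - t)"
    proof (cases "i = 0")
      case False
      have "1 / real i * \<rho> ^ i * (1 - t ^ i) \<le> 1 / real i * \<rho> ^ i * (real i * (1 - t))"
        using D \<rho> by (intro mult_left_mono) auto
      then show ?thesis using False by simp
    qed (use t in simp)
    then show "a \<rho> i - a (\<rho> * t) i \<le> \<rho> ^ i * (1 - t)"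
      using eq \<rho> t by auto
    show "0 \<le> a \<rho> i - a (\<rho> * t) i" using eq D \<rho> by simp
  qed
  have sums: "summable (\<lambda>i. a \<rho> i - a (\<rho> * t) i)"
    unfolding a_def using summable_log_tail[OF \<rho>, of N] summable_log_tail[OF \<rho>t, of N]
    by (rule summable_diff)
  show "0 \<le> log_tail N \<rho> - log_tail N (\<rho> * t)"
    unfolding diff using sums term_bounds(1) by (rule suminf_nonneg)
  have "(\<Sum>i. a \<rho> i - a (\<rho> * t) i) \<le> (\<Sum>i. \<rho> ^ i * (1 - t))"
    using sums term_bounds(2) summable_mult2[OF summable_geometric, of \<rho> "1 - t"] \<rho>
    by (intro suminf_le) auto
  also have "\<dots> = (1 - t) / (1 - \<rho>)"
    using suminf_mult2[OF summable_geometric, of \<rho> "1 - t"] suminf_geometric[of \<rho>] \<rho> by simp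
  finally show "log_tail N \<rho> - log_tail N (\<rho> * t) \<le> (1 - t) / (1 - \<rho>)" unfolding diff .
qed

lemma gamma_bounds:
  assumes r: "r > 1" and K: "2 \<le> K"
  shows "0 \<le> gamma1 r K N" "gamma1 r K N \<le> gamma2 r K N"
    "gamma2 r K N - gamma1 r K N \<le> real N * r / (real K - 1)"
proof -
  define \<rho> where "\<rho> = 1 - 1/r"
  define t where "t = 1 - 1 / (real K - 1)"
  have \<rho>: "0 \<le> \<rho>" "\<rho> < 1" using r by (auto simp: \<rho>_def)
  have t: "0 \<le> t" "t \<le> 1" using K by (auto simp: t_def)
  have "0 \<le> \<rho> * t" "\<rho> * t < 1" using \<rho> t mult_left_le[of t \<rho>] by auto
  then show "0 \<le> gamma1 r K N"
    unfolding gamma1_eq_log_tail \<rho>_def[symmetric] t_def[symmetric] by (simp add: log_tail_nonneg)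
  have diff: "gamma2 r K N - gamma1 r K N = real N * (log_tail N \<rho> - log_tail N (\<rho> * t))"
    by (simp add: gamma1_eq_log_tail gamma2_eq_log_tail \<rho>_def t_def right_diff_distrib)
  have "0 \<le> gamma2 r K N - gamma1 r K N"
    unfolding diff using log_tail_diff_le(1)[OF \<rho> t, of N] by simp
  then show "gamma1 r K N \<le> gamma2 r K N" by simp
  have "(1 - t) / (1 - \<rho>) = r / (real K - 1)" using r by (simp add: \<rho>_def t_def)
  then show "gamma2 r K N - gamma1 r K N \<le> real N * r / (real K - 1)"
    unfolding diff using mult_left_mono[OF log_tail_diff_le(2)[OF \<rho> t, of N], of "real N"] by simp
qed

lemma divide_add_diff_le:
  fixes D g h :: real
  assumes "0 < D" "0 \<le> g" "g \<le> h"
  shows "0 \<le> h / (D + h) - g / (D + g)" "h / (D + h) - g / (D + g) \<le> (h - g) / D"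
proof -
  have eq: "h / (D + h) - g / (D + g) = D * (h - g) / ((D + g) * (D + h))"
    using assms by (simp add: field_simps)
  show "0 \<le> h / (D + h) - g / (D + g)" unfolding eq using assms by simp
  have "D * (h - g) / ((D + g) * (D + h)) \<le> D * (h - g) / (D * D)"
    using assms by (intro divide_left_mono mult_mono) auto
  then show "h / (D + h) - g / (D + g) \<le> (h - g) / D" unfolding eq using assms by simp
qed

lemma UB_minus_LB_tendsto_zero:
  assumes r: "r > 1" and N: "N \<ge> 1"
  shows "((\<lambda>K. UB r K N - LB r K N) \<longlongrightarrow> 0) sequentially"
proof -
  define D where "D = (r ^ N - (r - 1) ^ N) / r ^ (N - 1)"
  have "(r - 1) ^ N < r ^ N" using r N by (intro power_strict_mono) auto
  then have "0 < D" using r by (simp add: D_def)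
  have bounds: "0 \<le> UB r K N - LB r K N \<and> UB r K N - LB r K N \<le> real N * r / D / (real K - 1)"
    if "2 \<le> K" for K
    using divide_add_diff_le[OF \<open>0 < D\<close> gamma_bounds(1,2)[OF r that, where N = N]]
      divide_right_mono[OF gamma_bounds(3)[OF r that, where N = N] less_imp_le[OF \<open>0 < D\<close>]]
    unfolding UB_def LB_def D_def[symmetric] by (simp add: divide_divide_eq_left mult.commute)
  show ?thesis
  proof (rule tendsto_sandwich[of "\<lambda>_. 0" _ _ "\<lambda>K. real N * r / D / (real K - 1)"])
    show "\<forall>\<^sub>F K in sequentially. 0 \<le> UB r K N - LB r K N"
      "\<forall>\<^sub>F K in sequentially. UB r K N - LB r K N \<le> real N * r / D / (real K - 1)"
      using bounds by (auto intro: eventually_mono[OF eventually_ge_at_top[of 2]])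
    show "(\<lambda>K. real N * r / D / (real K - 1)) \<longlonglongrightarrow> 0" by real_asymp
  qed simp
qed

theorem corollary3:
  shows "(\<forall>(r::real) (N::nat). r > 1 \<longrightarrow> N \<ge> 1 \<longrightarrow>
            ((\<lambda>K. UB r K N - LB r K N) \<longlongrightarrow> 0) sequentially)
       \<and> (\<forall>(r::real) (K::nat). r > 1 \<longrightarrow> K > 2 \<longrightarrow>
            ((\<lambda>N. eta r K N) \<longlongrightarrow> 0) sequentially)
       \<and> (\<forall>N::nat. N \<ge> 1 \<longrightarrow> (\<exists>f :: real \<Rightarrow> real.
            (\<forall>r>1. ((\<lambda>K. eta r K N) \<longlongrightarrow> f r) sequentially) \<and> (f \<longlongrightarrow> 1) at_top))
       \<and> (\<forall>(r::real) (K::nat). r > 1 \<longrightarrow> K > 2 \<longrightarrow>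
            (\<lambda>N. eta r K N) \<in> O(\<lambda>N. (1 - 1/r) ^ N))"
proof (intro conjI allI impI)
  show "((\<lambda>K. UB r K N - LB r K N) \<longlongrightarrow> 0) sequentially" if "r > 1" "N \<ge> 1" for r N
    using UB_minus_LB_tendsto_zero that .
  show "((\<lambda>N. eta r K N) \<longlongrightarrow> 0) sequentially" if "r > 1" "K > 2" for r K
    using eta_tendsto_zero that by simp
  show "\<exists>f. (\<forall>r>1. (\<lambda>K. eta r K N) \<longlonglongrightarrow> f r) \<and> (f \<longlongrightarrow> 1) at_top" if "N \<ge> 1" for N
    using eta_tendsto_eta_limit[OF _ that] eta_limit_tendsto_one[OF that]
    by (intro exI[of _ "\<lambda>r. eta_limit r N"]) blast
  show "(\<lambda>N. eta r K N) \<in> O(\<lambda>N. (1 - 1/r) ^ N)" if "r > 1" "K > 2" for r K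
    using eta_bigo_geometric that by simp
qed

end
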